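(* Let $x_1,\ldots,x_n\in\mathcal{X}$ be fixed points, $f$ a real function on $\mathcal{X}$, $h=(h_1,\ldots,h_m)^T$ real functions on $\mathcal{X}$, $\beta^\star\in\mathbb{R}^m$ with support $S^\star=\{k:\beta^\star_k\ne0\}$ of cardinality $\ell^\star\ge1$, $\overline{S^\star}=\{1,\ldots,m\}\setminus S^\star$, and $\lambda>0$. Let $H_c$ be the $n\times m$ column-centered matrix with entries $h_j(x_i)-n^{-1}\sum_{r}h_j(x_r)$, $H_{c,k}$ its $k$-th column, $H_{c,S^\star}$ the $n\times\ell^\star$ submatrix of columns indexed by $S^\star$, $f_c^{(n)}$ the centered vector with entries $f(x_i)-n^{-1}\sum_rf(x_r)$, and $\epsilon_c^{(n)}=f_c^{(n)}-H_c\beta^\star$. Suppose there exists $\nu>0$ such that $\|H_{c,S^\star}u\|_2^2\ge n\nu\|u\|_2^2$ for all $u\in\mathbb{R}^{\ell^\star}$, and there exists $\kappa\in(0,1]$ such that $$\frac{\ell^\star}{\nu n}\max_{k\in\overline{S^\star}}\max_{j\in S^\star}|H_{c,j}^TH_{c,k}|\le1-\kappa,\qquad\max_{k=1,\ldots,m}|H_{c,k}^T\epsilon_c^{(n)}|\le\tfrac12\kappa\lambda n.$$ Then the minimizer $\hat\beta^{\mathrm{lasso}}$ of $\beta\mapsto\frac{1}{2n}\|f_c^{(n)}-H_c\beta\|_2^2+\lambda\|\beta\|_1$ over $\mathbb{R}^m$ is unique, satisfies $\operatorname{supp}(\hat\beta^{\mathrm{lasso}})\subset S^\star$, and $$\max_{k\in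 S^\star}|\hat\beta^{\mathrm{lasso}}_k-\beta^\star_k|\le(1+\kappa/2)\sqrt{\ell^\star}\,\lambda/\nu.$$
   Context: $\operatorname{supp}(\beta)=\{j:\beta_j\neq0\}$. No probabilistic structure is involved: all quantities are deterministic. *)

theory Defs
  imports "HOL-Analysis.Analysis"
begin

text \<open>Points are x 0, ..., x (n-1); functions h 0, ..., h (m-1).
  Vectors in R^m are functions nat => real vanishing outside {..<m}.\<close>

definition Hc :: "nat \<Rightarrow> (nat \<Rightarrow> 'a) \<Rightarrow> (nat \<Rightarrow> 'a \<Rightarrow> real) \<Rightarrow> nat \<Rightarrow> nat \<Rightarrow> real" where
  "Hc n x h i k = h k (x i) - (\<Sum>r<n. h k (x r)) / real n"

definition fc :: "nat \<Rightarrow> (nat \<Rightarrow> 'a) \<Rightarrow> ('a \<Rightarrow> real) \<Rightarrow> nat \<Rightarrow> real" where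
  "fc n x f i = f (x i) - (\<Sum>r<n. f (x r)) / real n"

definition supp :: "(nat \<Rightarrow> real) \<Rightarrow> nat set" where
  "supp \<beta> = {j. \<beta> j \<noteq> 0}"

definition vecs :: "nat \<Rightarrow> (nat \<Rightarrow> real) set" where
  "vecs m = {\<beta>. \<forall>k\<ge>m. \<beta> k = 0}"

definition lasso_obj :: "nat \<Rightarrow> nat \<Rightarrow> (nat \<Rightarrow> 'a) \<Rightarrow> ('a \<Rightarrow> real) \<Rightarrow> (nat \<Rightarrow> 'a \<Rightarrow> real)
    \<Rightarrow> real \<Rightarrow> (nat \<Rightarrow> real) \<Rightarrow> real" where
  "lasso_obj n m x f h lam \<beta> =
     (\<Sum>i<n. (fc n x f i - (\<Sum>k<m. Hc n x h i k * \<beta> k))\<^sup>2) / (2 * real n)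
     + lam * (\<Sum>k<m. \<bar>\<beta> k\<bar>)"

definition is_lasso_min where
  "is_lasso_min n m x f h lam \<beta> \<longleftrightarrow> \<beta> \<in> vecs m \<and>
     (\<forall>\<gamma>\<in>vecs m. lasso_obj n m x f h lam \<beta> \<le> lasso_obj n m x f h lam \<gamma>)"

end

(* Primal-dual witness argument.  Let b minimise the lasso objective among the vectors supported
   on S = supp betas; it exists because the l1-penalty makes the objective coercive.  Testing the
   first-order condition of b in the coordinate directions bounds the residual correlations
   H_k^T (f_c - H_c b) by n lam for k in S.  Together with the noise bound, the eigenvalue
   condition and Cauchy-Schwarz this gives ||b - betas||_2 <= (1 + kappa/2) sqrt l lam / nu.
   For k outside S, incoherence and ||b - betas||_1 <= sqrt l ||b - betas||_2 bound the
   correlations by (1 - kappa^2/2) n lam < n lam.  This strict dual feasibility, together with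
   the injectivity of H_{c,S}, makes b the unique minimiser over all of R^m. *)

theory Submission
  imports Defs
begin

definition lasso_loss ::
    "nat \<Rightarrow> nat \<Rightarrow> (nat \<Rightarrow> real) \<Rightarrow> (nat \<Rightarrow> nat \<Rightarrow> real) \<Rightarrow> real \<Rightarrow> (nat \<Rightarrow> real) \<Rightarrow> real" where
  "lasso_loss n m y H lam b =
     (\<Sum>i<n. (y i - (\<Sum>k<m. H i k * b k))\<^sup>2) / (2 * real n) + lam * (\<Sum>k<m. \<bar>b k\<bar>)"

text \<open>\<open>n\<close> times the negative gradient of the least-squares part of \<^const>\<open>lasso_loss\<close> at \<open>b\<close>.\<close>
definition resid_corr ::
    "nat \<Rightarrow> nat \<Rightarrow> (nat \<Rightarrow> real) \<Rightarrow> (nat \<Rightarrow> nat \<Rightarrow> real) \<Rightarrow> (nat \<Rightarrow> real) \<Rightarrow> nat \<Rightarrow> real" where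
  "resid_corr n m y H b k = (\<Sum>i<n. H i k * (y i - (\<Sum>j<m. H i j * b j)))"

lemma lasso_obj_eq_lasso_loss: "lasso_obj n m x f h lam = lasso_loss n m (fc n x f) (Hc n x h) lam"
  by (simp add: fun_eq_iff lasso_obj_def lasso_loss_def)

lemma supp_subset_iff: "supp b \<subseteq> S \<longleftrightarrow> (\<forall>k. k \<notin> S \<longrightarrow> b k = 0)"
  by (auto simp: supp_def)

lemma sum_sq_resid_add:
  "(\<Sum>i<n. (y i - (\<Sum>k<m. H i k * (b k + d k)))\<^sup>2) =
     (\<Sum>i<n. (y i - (\<Sum>k<m. H i k * b k))\<^sup>2) - 2 * (\<Sum>k<m. d k * resid_corr n m y H b k)
     + (\<Sum>i<n. (\<Sum>k<m. H i k * d k)\<^sup>2)"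
proof -
  have lin: "(\<Sum>k<m. H i k * (b k + d k)) = (\<Sum>k<m. H i k * b k) + (\<Sum>k<m. H i k * d k)" for i
    by (simp add: distrib_left sum.distrib)
  have cross: "(\<Sum>k<m. d k * resid_corr n m y H b k)
      = (\<Sum>i<n. (y i - (\<Sum>j<m. H i j * b j)) * (\<Sum>k<m. H i k * d k))"
    by (simp add: resid_corr_def sum_distrib_left sum_distrib_right sum.swap[of _ "{..<m}"] mult_ac)
  show ?thesis unfolding lin cross
    by (simp add: power2_eq_square algebra_simps sum.distrib sum_subtractf sum_distrib_left)
qed

lemma lasso_loss_add:
  assumes "n > 0"
  shows "2 * real n * (lasso_loss n m y H lam (\<lambda>k. b k + d k) - lasso_loss n m y H lam b)
    = (\<Sum>i<n. (\<Sum>k<m. H i k * d k)\<^sup>2)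
      + 2 * (\<Sum>k<m. real n * lam * (\<bar>b k + d k\<bar> - \<bar>b k\<bar>) - d k * resid_corr n m y H b k)"
proof -
  have "2 * real n * (lasso_loss n m y H lam (\<lambda>k. b k + d k) - lasso_loss n m y H lam b)
      = (\<Sum>i<n. (y i - (\<Sum>k<m. H i k * (b k + d k)))\<^sup>2) - (\<Sum>i<n. (y i - (\<Sum>k<m. H i k * b k))\<^sup>2)
        + 2 * real n * lam * ((\<Sum>k<m. \<bar>b k + d k\<bar>) - (\<Sum>k<m. \<bar>b k\<bar>))"
    using assms by (simp add: lasso_loss_def field_simps)
  then show ?thesis
    unfolding sum_sq_resid_add
    by (simp add: algebra_simps sum.distrib sum_subtractf sum_distrib_left)
qed

lemma nonneg_if_nonneg_add_small_mult:
  fixes X A :: real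
  assumes "0 \<le> A" and "\<And>t. 0 < t \<Longrightarrow> t \<le> 1 \<Longrightarrow> 0 \<le> X + t * A"
  shows "0 \<le> X"
proof (rule field_le_epsilon)
  fix e :: real
  assume "0 < e"
  define t where "t = min 1 (e / (A + 1))"
  have t: "0 < t" "t \<le> 1"
    using \<open>0 < e\<close> assms(1) by (auto simp: t_def)
  have "t * A \<le> e / (A + 1) * A"
    using assms(1) by (intro mult_right_mono) (auto simp: t_def)
  also have "\<dots> \<le> e"
    using \<open>0 < e\<close> assms(1) by (simp add: field_simps)
  finally show "0 \<le> X + e"
    using assms(2)[OF t] by linarith
qed

lemma abs_add_mult_diff_le:
  fixes a d t :: real
  assumes "0 \<le> t" "t \<le> 1"
  shows "\<bar>a + t * d\<bar> - \<bar>a\<bar> \<le> t * (\<bar>a + d\<bar> - \<bar>a\<bar>)"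
proof -
  have "\<bar>a + t * d\<bar> = \<bar>(1 - t) * a + t * (a + d)\<bar>"
    by (simp add: algebra_simps)
  also have "\<dots> \<le> (1 - t) * \<bar>a\<bar> + t * \<bar>a + d\<bar>"
    using abs_triangle_ineq[of "(1 - t) * a" "t * (a + d)"] assms by (simp add: abs_mult)
  finally show ?thesis
    by (simp add: algebra_simps)
qed

lemma lasso_loss_add_mult_le:
  assumes n: "n > 0" and lam: "0 \<le> lam" and t: "0 \<le> t" "t \<le> 1"
  shows "2 * real n * (lasso_loss n m y H lam (\<lambda>k. b k + t * d k) - lasso_loss n m y H lam b)
    \<le> t * (t * (\<Sum>i<n. (\<Sum>k<m. H i k * d k)\<^sup>2)
      + 2 * (\<Sum>k<m. real n * lam * (\<bar>b k + d k\<bar> - \<bar>b k\<bar>) - d k * resid_corr n m y H b k))"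
    (is "_ \<le> t * (t * ?A + 2 * ?X)")
proof -
  have "(\<Sum>k<m. H i k * (t * d k)) = t * (\<Sum>k<m. H i k * d k)" for i
    by (simp add: sum_distrib_left mult.left_commute)
  then have quad: "(\<Sum>i<n. (\<Sum>k<m. H i k * (t * d k))\<^sup>2) = t\<^sup>2 * ?A"
    unfolding sum_distrib_left[of "t\<^sup>2"] by (simp only: power_mult_distrib)
  have "real n * lam * (\<bar>b k + t * d k\<bar> - \<bar>b k\<bar>) \<le> real n * lam * (t * (\<bar>b k + d k\<bar> - \<bar>b k\<bar>))"
    for k
    using t lam abs_add_mult_diff_le[of t "b k" "d k"] by (intro mult_left_mono) simp_all
  then have lin:
    "(\<Sum>k<m. real n * lam * (\<bar>b k + t * d k\<bar> - \<bar>b k\<bar>) - t * d k * resid_corr n m y H b k)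
      \<le> t * ?X"
    unfolding sum_distrib_left by (intro sum_mono) (simp add: algebra_simps)
  have "2 * real n * (lasso_loss n m y H lam (\<lambda>k. b k + t * d k) - lasso_loss n m y H lam b)
      = t\<^sup>2 * ?A
        + 2 * (\<Sum>k<m. real n * lam * (\<bar>b k + t * d k\<bar> - \<bar>b k\<bar>) - t * d k * resid_corr n m y H b k)"
    unfolding quad[symmetric] by (rule lasso_loss_add[OF n])
  also have "\<dots> \<le> t\<^sup>2 * ?A + 2 * (t * ?X)"
    using lin by simp
  also have "\<dots> = t * (t * ?A + 2 * ?X)"
    by (simp add: algebra_simps power2_eq_square)
  finally show ?thesis .
qed

lemma lasso_restricted_min_first_order:
  assumes n: "n > 0" and lam: "0 \<le> lam" and S: "S \<subseteq> {..<m}"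
    and b: "supp b \<subseteq> S" and d: "supp d \<subseteq> S"
    and min: "\<forall>b'. supp b' \<subseteq> S \<longrightarrow> lasso_loss n m y H lam b \<le> lasso_loss n m y H lam b'"
  shows "0 \<le> (\<Sum>k\<in>S. real n * lam * (\<bar>b k + d k\<bar> - \<bar>b k\<bar>) - d k * resid_corr n m y H b k)"
proof -
  define g where
    "g k = real n * lam * (\<bar>b k + d k\<bar> - \<bar>b k\<bar>) - d k * resid_corr n m y H b k" for k
  define A where "A = (\<Sum>i<n. (\<Sum>k<m. H i k * d k)\<^sup>2)"
  have A0: "0 \<le> A"
    unfolding A_def by (intro sum_nonneg) simp
  have "0 \<le> 2 * sum g {..<m} + t * A" if t: "0 < t" "t \<le> 1" for t
  proof -
    have "supp (\<lambda>k. b k + t * d k) \<subseteq> S"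
      using b d by (auto simp: supp_subset_iff)
    then have "0 \<le> 2 * real n *
        (lasso_loss n m y H lam (\<lambda>k. b k + t * d k) - lasso_loss n m y H lam b)"
      using min by simp
    also have "\<dots> \<le> t * (2 * sum g {..<m} + t * A)"
      using lasso_loss_add_mult_le[OF n lam _ t(2), of m y H b d] t
      by (simp add: A_def g_def add.commute)
    finally show ?thesis
      using t by (simp add: zero_le_mult_iff)
  qed
  then have "0 \<le> 2 * sum g {..<m}"
    by (rule nonneg_if_nonneg_add_small_mult[OF A0])
  moreover have "sum g {..<m} = sum g S"
    using S d by (intro sum.mono_neutral_right) (auto simp: g_def supp_subset_iff)
  ultimately show ?thesis
    by (simp add: g_def)
qed

lemma lasso_restricted_min_resid_corr_le:
  assumes n: "n > 0" and lam: "0 \<le> lam" and S: "S \<subseteq> {..<m}"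
    and b: "supp b \<subseteq> S" and j: "j \<in> S"
    and min: "\<forall>b'. supp b' \<subseteq> S \<longrightarrow> lasso_loss n m y H lam b \<le> lasso_loss n m y H lam b'"
  shows "\<bar>resid_corr n m y H b j\<bar> \<le> real n * lam"
proof -
  have finS: "finite S"
    using S finite_subset by blast
  have "s * resid_corr n m y H b j \<le> real n * lam" if s: "\<bar>s\<bar> = 1" for s
  proof -
    define d where "d k = (if k = j then s else 0)" for k
    have "supp d \<subseteq> S"
      using j by (auto simp: d_def supp_def)
    then have "0 \<le> (\<Sum>k\<in>S. real n * lam * (\<bar>b k + d k\<bar> - \<bar>b k\<bar>) - d k * resid_corr n m y H b k)"
      by (rule lasso_restricted_min_first_order[OF n lam S b _ min])
    also have "\<dots> = (\<Sum>k\<in>S. if k = j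
        then real n * lam * (\<bar>b j + s\<bar> - \<bar>b j\<bar>) - s * resid_corr n m y H b j else 0)"
      by (rule sum.cong) (simp_all add: d_def)
    also have "\<dots> = real n * lam * (\<bar>b j + s\<bar> - \<bar>b j\<bar>) - s * resid_corr n m y H b j"
      using finS j by simp
    also have "\<dots> \<le> real n * lam - s * resid_corr n m y H b j"
      using n lam s abs_triangle_ineq[of "b j" s] by (simp add: mult_left_le)
    finally show ?thesis
      by simp
  qed
  from this[of 1] this[of "-1"] show ?thesis
    by (simp add: abs_le_iff)
qed

lemma lasso_restricted_min_exists:
  assumes lam: "lam > 0" and S: "S \<subseteq> {..<m}"
  shows "\<exists>b. supp b \<subseteq> S \<and>
    (\<forall>b'. supp b' \<subseteq> S \<longrightarrow> lasso_loss n m y H lam b \<le> lasso_loss n m y H lam b')"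
proof -
  let ?L = "lasso_loss n m y H lam"
  have L_ge: "lam * (\<Sum>k<m. \<bar>b k\<bar>) \<le> ?L b" for b
    unfolding lasso_loss_def by (simp add: sum_nonneg)
  \<comment> \<open>Outside the box \<open>K\<close> the penalty alone exceeds the loss at \<open>0\<close>.\<close>
  define R where "R = ?L (\<lambda>_. 0) / lam"
  define K where "K = PiE UNIV (\<lambda>k. if k \<in> S then {-R..R} else {0 :: real})"
  have "compactin (product_topology (\<lambda>_. euclidean) UNIV) K"
    unfolding K_def by (subst compactin_PiE) auto
  then have "compact K"
    by (simp add: euclidean_product_topology)
  moreover have zero_K: "(\<lambda>_. 0) \<in> K"
    using L_ge[of "\<lambda>_. 0"] lam by (auto simp: K_def R_def PiE_iff)
  moreover have "continuous_on UNIV ?L"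
    unfolding lasso_loss_def divide_inverse
    by (intro continuous_intros continuous_on_product_coordinates)
  then have "continuous_on K ?L"
    by (rule continuous_on_subset) simp
  ultimately obtain b where "b \<in> K" and b_min: "\<forall>b'\<in>K. ?L b \<le> ?L b'"
    using continuous_attains_inf by blast
  have "?L b \<le> ?L b'" if "supp b' \<subseteq> S" for b'
  proof (cases "b' \<in> K")
    case False
    with that obtain k where k: "k \<in> S" "R < \<bar>b' k\<bar>"
      by (force simp: K_def supp_def abs_le_iff)
    have "?L b \<le> lam * R"
      using b_min zero_K lam by (simp add: R_def)
    also have "\<dots> < lam * \<bar>b' k\<bar>"
      using k lam by simp
    also have "\<dots> \<le> lam * (\<Sum>k<m. \<bar>b' k\<bar>)"
      using k S lam by (intro mult_left_mono member_le_sum) auto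
    also have "\<dots> \<le> ?L b'"
      by (rule L_ge)
    finally show ?thesis
      by simp
  qed (use b_min in blast)
  moreover have "supp b \<subseteq> S"
    using \<open>b \<in> K\<close> by (auto simp: K_def supp_def split: if_splits)
  ultimately show ?thesis
    by blast
qed

lemma resid_corr_diff_eq_gram:
  assumes S: "S \<subseteq> {..<m}" and "supp b \<subseteq> S" "supp \<beta> \<subseteq> S"
  shows "resid_corr n m y H \<beta> k - resid_corr n m y H b k
    = (\<Sum>j\<in>S. (\<Sum>i<n. H i j * H i k) * (b j - \<beta> j))"
proof -
  have pointwise: "(\<Sum>j<m. H i j * b j) - (\<Sum>j<m. H i j * \<beta> j) = (\<Sum>j\<in>S. H i j * (b j - \<beta> j))" for i
  proof -
    have "(\<Sum>j<m. H i j * b j) - (\<Sum>j<m. H i j * \<beta> j) = (\<Sum>j<m. H i j * (b j - \<beta> j))"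
      by (simp add: right_diff_distrib sum_subtractf)
    also have "\<dots> = (\<Sum>j\<in>S. H i j * (b j - \<beta> j))"
      using assms by (intro sum.mono_neutral_right) (auto simp: supp_subset_iff)
    finally show ?thesis .
  qed
  have "resid_corr n m y H \<beta> k - resid_corr n m y H b k
      = (\<Sum>i<n. H i k * ((\<Sum>j<m. H i j * b j) - (\<Sum>j<m. H i j * \<beta> j)))"
    by (simp add: resid_corr_def right_diff_distrib sum_subtractf)
  also have "\<dots> = (\<Sum>i<n. H i k * (\<Sum>j\<in>S. H i j * (b j - \<beta> j)))"
    by (simp only: pointwise)
  also have "\<dots> = (\<Sum>j\<in>S. (\<Sum>i<n. H i j * H i k) * (b j - \<beta> j))"
    by (simp add: sum_distrib_left sum_distrib_right sum.swap[of _ S] mult_ac)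
  finally show ?thesis .
qed

lemma sum_sq_lincomb_eq_gram_form:
  fixes H :: "nat \<Rightarrow> 'a \<Rightarrow> real"
  shows "(\<Sum>i<n. (\<Sum>j\<in>S. H i j * u j)\<^sup>2) = (\<Sum>j\<in>S. u j * (\<Sum>l\<in>S. (\<Sum>i<n. H i l * H i j) * u l))"
proof -
  have "(\<Sum>i<n. (\<Sum>j\<in>S. H i j * u j)\<^sup>2) = (\<Sum>i<n. \<Sum>j\<in>S. \<Sum>l\<in>S. (H i j * u j) * (H i l * u l))"
    by (simp add: power2_eq_square sum_product)
  also have "\<dots> = (\<Sum>j\<in>S. \<Sum>l\<in>S. \<Sum>i<n. (H i j * u j) * (H i l * u l))"
    by (simp only: sum.swap[of _ "{..<n}"])
  also have "\<dots> = (\<Sum>j\<in>S. u j * (\<Sum>l\<in>S. (\<Sum>i<n. H i l * H i j) * u l))"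
    by (simp add: sum_distrib_left sum_distrib_right mult_ac)
  finally show ?thesis .
qed

lemma abs_le_L2_set: "finite A \<Longrightarrow> i \<in> A \<Longrightarrow> \<bar>f i\<bar> \<le> L2_set f A"
  using member_le_L2_set[of A i "\<lambda>i. \<bar>f i\<bar>"] by (simp add: L2_set_def)

lemma sum_abs_le_L2_set: "(\<Sum>i\<in>A. \<bar>f i\<bar>) \<le> sqrt (card A) * L2_set f A"
  using L2_set_mult_ineq[of f "\<lambda>_. 1" A] by (simp add: L2_set_constant mult.commute)

lemma L2_set_le_of_coercive:
  fixes u w :: "'a \<Rightarrow> real"
  assumes a: "0 < a" and coercive: "a * (L2_set u S)\<^sup>2 \<le> (\<Sum>j\<in>S. u j * w j)"
    and w: "\<forall>j\<in>S. \<bar>w j\<bar> \<le> B"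
  shows "L2_set u S \<le> sqrt (card S) * B / a"
proof -
  have w_le: "L2_set w S \<le> sqrt (card S) * B"
  proof (cases "S = {}")
    case False
    then have "0 \<le> B"
      using w by force
    have "L2_set w S = L2_set (\<lambda>j. \<bar>w j\<bar>) S"
      by (simp add: L2_set_def)
    also have "\<dots> \<le> L2_set (\<lambda>_. B) S"
      using w by (intro L2_set_mono) auto
    finally show ?thesis
      using \<open>0 \<le> B\<close> by (simp add: L2_set_constant)
  qed simp
  have "a * (L2_set u S)\<^sup>2 \<le> (\<Sum>j\<in>S. \<bar>u j\<bar> * \<bar>w j\<bar>)"
    using coercive by (rule order_trans) (intro sum_mono, metis abs_ge_self abs_mult)
  also have "\<dots> \<le> L2_set u S * L2_set w S"
    by (rule L2_set_mult_ineq)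
  also have "\<dots> \<le> L2_set u S * (sqrt (card S) * B)"
    by (intro mult_left_mono w_le L2_set_nonneg)
  finally have "L2_set u S * (a * L2_set u S) \<le> L2_set u S * (sqrt (card S) * B)"
    by (simp add: power2_eq_square mult_ac)
  then have "a * L2_set u S \<le> sqrt (card S) * B"
    using order_trans[OF L2_set_nonneg w_le] L2_set_nonneg[of u S]
    by (cases "L2_set u S = 0") (auto simp: mult_le_cancel_left)
  then show ?thesis
    using a by (simp add: pos_le_divide_eq mult.commute)
qed

lemma lasso_restricted_min_error_L2_le:
  assumes n: "n > 0" and nu: "\<nu> > 0" and lam: "0 \<le> lam" and S: "S \<subseteq> {..<m}"
    and b: "supp b \<subseteq> S" and \<beta>: "supp \<beta> \<subseteq> S"
    and min: "\<forall>b'. supp b' \<subseteq> S \<longrightarrow> lasso_loss n m y H lam b \<le> lasso_loss n m y H lam b'"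
    and eig: "\<forall>u. (\<Sum>i<n. (\<Sum>j\<in>S. H i j * u j)\<^sup>2) \<ge> real n * \<nu> * (\<Sum>j\<in>S. (u j)\<^sup>2)"
    and noise: "\<forall>j\<in>S. \<bar>resid_corr n m y H \<beta> j\<bar> \<le> \<kappa> * lam * real n / 2"
  shows "L2_set (\<lambda>j. b j - \<beta> j) S \<le> (1 + \<kappa> / 2) * sqrt (card S) * lam / \<nu>"
proof -
  let ?D = "\<lambda>j. b j - \<beta> j"
  let ?w = "\<lambda>j. resid_corr n m y H \<beta> j - resid_corr n m y H b j"
  have "real n * \<nu> * (L2_set ?D S)\<^sup>2 = real n * \<nu> * (\<Sum>j\<in>S. (?D j)\<^sup>2)"
    by (simp add: L2_set_def sum_nonneg)
  also have "\<dots> \<le> (\<Sum>i<n. (\<Sum>j\<in>S. H i j * ?D j)\<^sup>2)"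
    using eig[rule_format, of ?D] by simp
  also have "\<dots> = (\<Sum>j\<in>S. ?D j * (\<Sum>l\<in>S. (\<Sum>i<n. H i l * H i j) * ?D l))"
    by (rule sum_sq_lincomb_eq_gram_form)
  also have "\<dots> = (\<Sum>j\<in>S. ?D j * ?w j)"
    by (simp add: resid_corr_diff_eq_gram[OF S b \<beta>])
  finally have coercive: "real n * \<nu> * (L2_set ?D S)\<^sup>2 \<le> (\<Sum>j\<in>S. ?D j * ?w j)" .
  have "\<bar>?w j\<bar> \<le> real n * lam + \<kappa> * lam * real n / 2" if "j \<in> S" for j
  proof -
    have "\<bar>?w j\<bar> \<le> \<bar>resid_corr n m y H \<beta> j\<bar> + \<bar>resid_corr n m y H b j\<bar>"
      by (rule abs_triangle_ineq4)
    then show ?thesis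
      using lasso_restricted_min_resid_corr_le[OF n lam S b that min] noise that by fastforce
  qed
  then have "L2_set ?D S \<le> sqrt (card S) * (real n * lam + \<kappa> * lam * real n / 2) / (real n * \<nu>)"
    using n nu by (intro L2_set_le_of_coercive[OF _ coercive]) auto
  also have "\<dots> = (1 + \<kappa> / 2) * sqrt (card S) * lam / \<nu>"
    using n nu by (simp add: field_simps)
  finally show ?thesis .
qed

lemma lasso_resid_corr_off_support_less:
  assumes n: "n > 0" and nu: "\<nu> > 0" and lam: "lam > 0" and kappa: "0 < \<kappa>" "\<kappa> \<le> 1"
    and S: "S \<subseteq> {..<m}" and b: "supp b \<subseteq> S" and \<beta>: "supp \<beta> \<subseteq> S"
    and incoh: "\<forall>j\<in>S. real (card S) / (\<nu> * real n) * \<bar>\<Sum>i<n. H i j * H i k\<bar> \<le> 1 - \<kappa>"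
    and noise: "\<bar>resid_corr n m y H \<beta> k\<bar> \<le> \<kappa> * lam * real n / 2"
    and err: "L2_set (\<lambda>j. b j - \<beta> j) S \<le> (1 + \<kappa> / 2) * sqrt (card S) * lam / \<nu>"
  shows "\<bar>resid_corr n m y H b k\<bar> < real n * lam"
proof -
  define \<rho> where "\<rho> = (1 - \<kappa>) * \<nu> * real n / real (card S)"
  have \<rho>0: "0 \<le> \<rho>"
    using kappa nu by (simp add: \<rho>_def)
  have gram: "\<bar>\<Sum>i<n. H i j * H i k\<bar> \<le> \<rho>" if "j \<in> S" for j
  proof -
    have "card S > 0"
      using that S by (metis card_gt_0_iff empty_iff finite_nat_iff_bounded)
    then show ?thesis
      using incoh that nu n by (simp add: \<rho>_def field_simps)
  qed
  have "\<bar>\<Sum>j\<in>S. (\<Sum>i<n. H i j * H i k) * (b j - \<beta> j)\<bar>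
      \<le> (\<Sum>j\<in>S. \<bar>\<Sum>i<n. H i j * H i k\<bar> * \<bar>b j - \<beta> j\<bar>)"
    by (rule order_trans[OF sum_abs]) (simp add: abs_mult)
  also have "\<dots> \<le> (\<Sum>j\<in>S. \<rho> * \<bar>b j - \<beta> j\<bar>)"
    by (intro sum_mono mult_right_mono gram) auto
  also have "\<dots> \<le> \<rho> * (sqrt (card S) * L2_set (\<lambda>j. b j - \<beta> j) S)"
    unfolding sum_distrib_left[symmetric] using \<rho>0 by (intro mult_left_mono sum_abs_le_L2_set)
  also have "\<dots> \<le> \<rho> * (sqrt (card S) * ((1 + \<kappa> / 2) * sqrt (card S) * lam / \<nu>))"
    using \<rho>0 err by (intro mult_left_mono) auto
  also have "\<dots> = \<rho> * real (card S) * ((1 + \<kappa> / 2) * lam / \<nu>)"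
    by (simp add: mult_ac flip: real_sqrt_mult)
  also have "\<dots> \<le> (1 - \<kappa>) * (1 + \<kappa> / 2) * real n * lam"
    using kappa nu lam by (cases "card S = 0") (simp_all add: \<rho>_def)
  finally have gram_term: "\<bar>\<Sum>j\<in>S. (\<Sum>i<n. H i j * H i k) * (b j - \<beta> j)\<bar>
      \<le> (1 - \<kappa>) * (1 + \<kappa> / 2) * real n * lam" .
  have "\<bar>resid_corr n m y H b k\<bar> \<le> \<kappa> * lam * real n / 2 + (1 - \<kappa>) * (1 + \<kappa> / 2) * real n * lam"
    using resid_corr_diff_eq_gram[OF S b \<beta>, of n y H k] noise gram_term by linarith
  also have "\<dots> = real n * lam - \<kappa>\<^sup>2 * real n * lam / 2"
    by (simp add: field_simps power2_eq_square)
  also have "\<dots> < real n * lam"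
    using n lam kappa by simp
  finally show ?thesis .
qed

lemma lasso_restricted_min_gap_ge:
  assumes n: "n > 0" and lam: "0 \<le> lam" and S: "S \<subseteq> {..<m}" and b: "supp b \<subseteq> S"
    and min: "\<forall>b'. supp b' \<subseteq> S \<longrightarrow> lasso_loss n m y H lam b \<le> lasso_loss n m y H lam b'"
  shows "(\<Sum>i<n. (\<Sum>k<m. H i k * (\<gamma> k - b k))\<^sup>2)
      + 2 * (\<Sum>k\<in>{..<m} - S. (real n * lam - \<bar>resid_corr n m y H b k\<bar>) * \<bar>\<gamma> k - b k\<bar>)
    \<le> 2 * real n * (lasso_loss n m y H lam \<gamma> - lasso_loss n m y H lam b)"
proof -
  define d where "d k = \<gamma> k - b k" for k
  define g where
    "g k = real n * lam * (\<bar>b k + d k\<bar> - \<bar>b k\<bar>) - d k * resid_corr n m y H b k" for k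
  have "\<gamma> = (\<lambda>k. b k + d k)"
    by (simp add: d_def)
  then have gap: "2 * real n * (lasso_loss n m y H lam \<gamma> - lasso_loss n m y H lam b)
      = (\<Sum>i<n. (\<Sum>k<m. H i k * d k)\<^sup>2) + 2 * (sum g S + sum g ({..<m} - S))"
    using lasso_loss_add[OF n, of m y H lam b d] sum.subset_diff[OF S, of g]
    by (simp add: g_def)
  have "0 \<le> sum g S"
  proof -
    define d\<^sub>S where "d\<^sub>S k = (if k \<in> S then d k else 0)" for k
    have "supp d\<^sub>S \<subseteq> S"
      by (auto simp: d\<^sub>S_def supp_def)
    from lasso_restricted_min_first_order[OF n lam S b this min]
    show ?thesis
      by (simp add: g_def d\<^sub>S_def cong: sum.cong)
  qed
  moreover have "(real n * lam - \<bar>resid_corr n m y H b k\<bar>) * \<bar>d k\<bar> \<le> g k"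
    if "k \<in> {..<m} - S" for k
  proof -
    have "b k = 0"
      using that b by (auto simp: supp_def)
    moreover have "d k * resid_corr n m y H b k \<le> \<bar>resid_corr n m y H b k\<bar> * \<bar>d k\<bar>"
      by (metis abs_ge_self abs_mult mult.commute)
    ultimately show ?thesis
      by (simp add: g_def left_diff_distrib)
  qed
  then have "(\<Sum>k\<in>{..<m} - S. (real n * lam - \<bar>resid_corr n m y H b k\<bar>) * \<bar>d k\<bar>)
      \<le> sum g ({..<m} - S)"
    by (rule sum_mono)
  ultimately show ?thesis
    unfolding gap by (simp add: d_def)
qed

lemma lasso_unique_min_of_strict_dual_feasible:
  assumes n: "n > 0" and lam: "0 \<le> lam" and S: "S \<subseteq> {..<m}" and b: "supp b \<subseteq> S"
    and min: "\<forall>b'. supp b' \<subseteq> S \<longrightarrow> lasso_loss n m y H lam b \<le> lasso_loss n m y H lam b'"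
    and strict: "\<forall>k\<in>{..<m} - S. \<bar>resid_corr n m y H b k\<bar> < real n * lam"
    and inj: "\<forall>u. (\<Sum>i<n. (\<Sum>j\<in>S. H i j * u j)\<^sup>2) = 0 \<longrightarrow> (\<forall>j\<in>S. u j = 0)"
    and \<gamma>: "\<gamma> \<in> vecs m"
  shows "lasso_loss n m y H lam b \<le> lasso_loss n m y H lam \<gamma>"
    and "lasso_loss n m y H lam \<gamma> \<le> lasso_loss n m y H lam b \<Longrightarrow> \<gamma> = b"
proof -
  define A where "A = (\<Sum>i<n. (\<Sum>k<m. H i k * (\<gamma> k - b k))\<^sup>2)"
  define r where "r k = (real n * lam - \<bar>resid_corr n m y H b k\<bar>) * \<bar>\<gamma> k - b k\<bar>" for k
  have A0: "0 \<le> A"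
    unfolding A_def by (intro sum_nonneg) simp
  have r0: "0 \<le> r k" if "k \<in> {..<m} - S" for k
  proof -
    have "\<bar>resid_corr n m y H b k\<bar> < real n * lam"
      using strict that by blast
    then show ?thesis
      by (simp add: r_def)
  qed
  have gap: "A + 2 * sum r ({..<m} - S)
      \<le> 2 * real n * (lasso_loss n m y H lam \<gamma> - lasso_loss n m y H lam b)"
    unfolding A_def r_def by (rule lasso_restricted_min_gap_ge[OF n lam S b min])
  have r_sum0: "0 \<le> sum r ({..<m} - S)"
    by (intro sum_nonneg r0)
  then have "0 \<le> 2 * real n * (lasso_loss n m y H lam \<gamma> - lasso_loss n m y H lam b)"
    using gap A0 by linarith
  then show "lasso_loss n m y H lam b \<le> lasso_loss n m y H lam \<gamma>"
    using n by (simp add: zero_le_mult_iff)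
  assume "lasso_loss n m y H lam \<gamma> \<le> lasso_loss n m y H lam b"
  then have "2 * real n * (lasso_loss n m y H lam \<gamma> - lasso_loss n m y H lam b) \<le> 0"
    using n by (simp add: mult_le_0_iff)
  then have "A = 0" and r_sum: "sum r ({..<m} - S) = 0"
    using gap A0 r_sum0 by linarith+
  have off: "\<gamma> k = b k" if k: "k \<in> {..<m} - S" for k
  proof -
    have "r k = 0"
      using r_sum sum_nonneg_eq_0_iff[of "{..<m} - S" r] r0 k by simp
    moreover have "\<bar>resid_corr n m y H b k\<bar> < real n * lam"
      using strict k by blast
    ultimately show ?thesis
      by (simp add: r_def)
  qed
  have "(\<Sum>k<m. H i k * (\<gamma> k - b k)) = (\<Sum>k\<in>S. H i k * (\<gamma> k - b k))" for i
    using S off by (intro sum.mono_neutral_right) auto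
  with \<open>A = 0\<close> have "(\<Sum>i<n. (\<Sum>j\<in>S. H i j * (\<gamma> j - b j))\<^sup>2) = 0"
    by (simp add: A_def)
  then have on_S: "\<forall>j\<in>S. \<gamma> j - b j = 0"
    using inj[rule_format, of "\<lambda>j. \<gamma> j - b j"] by blast
  show "\<gamma> = b"
  proof
    fix k
    show "\<gamma> k = b k"
    proof (cases "k < m")
      case True
      then show ?thesis
        using off on_S by (cases "k \<in> S") auto
    next
      case False
      then show ?thesis
        using \<gamma> b S by (auto simp: vecs_def supp_def)
    qed
  qed
qed

lemma lincomb_injective_of_lower_bound:
  assumes "0 < c" and "finite S"
    and bound: "\<forall>u. (\<Sum>i<n. (\<Sum>j\<in>S. H i j * u j)\<^sup>2) \<ge> c * (\<Sum>j\<in>S. (u j)\<^sup>2)"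
  shows "\<forall>u. (\<Sum>i<n. (\<Sum>j\<in>S. H i j * u j)\<^sup>2) = 0 \<longrightarrow> (\<forall>j\<in>S. u j = (0 :: real))"
proof (intro allI impI)
  fix u :: "'a \<Rightarrow> real"
  assume "(\<Sum>i<n. (\<Sum>j\<in>S. H i j * u j)\<^sup>2) = 0"
  then have "c * (\<Sum>j\<in>S. (u j)\<^sup>2) \<le> 0"
    using bound[rule_format, of u] by simp
  then have "(\<Sum>j\<in>S. (u j)\<^sup>2) \<le> 0"
    using \<open>0 < c\<close> by (simp add: mult_le_0_iff)
  then show "\<forall>j\<in>S. u j = 0"
    using sum_nonneg_eq_0_iff[OF \<open>finite S\<close>, of "\<lambda>j. (u j)\<^sup>2"]
    by (simp add: order_antisym sum_nonneg)
qed

theorem lemma9: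
  fixes n m :: nat and x :: "nat \<Rightarrow> 'a" and f :: "'a \<Rightarrow> real"
    and h :: "nat \<Rightarrow> 'a \<Rightarrow> real" and \<beta>s :: "nat \<Rightarrow> real"
    and lam \<nu> \<kappa> :: real
  assumes n_pos: "n \<ge> 1"
    and \<beta>s_vec: "\<beta>s \<in> vecs m"
    and l_pos: "card (supp \<beta>s) \<ge> 1"
    and lam_pos: "lam > 0"
    and nu_pos: "\<nu> > 0"
    and eig: "\<forall>u :: nat \<Rightarrow> real.
       (\<Sum>i<n. (\<Sum>j\<in>supp \<beta>s. Hc n x h i j * u j)\<^sup>2)
         \<ge> real n * \<nu> * (\<Sum>j\<in>supp \<beta>s. (u j)\<^sup>2)"
    and kappa: "0 < \<kappa>" "\<kappa> \<le> 1"
    and incoh: "\<forall>k\<in>{..<m} - supp \<beta>s. \<forall>j\<in>supp \<beta>s.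
       real (card (supp \<beta>s)) / (\<nu> * real n) * \<bar>\<Sum>i<n. Hc n x h i j * Hc n x h i k\<bar> \<le> 1 - \<kappa>"
    and noise: "\<forall>k<m. \<bar>\<Sum>i<n. Hc n x h i k *
        (fc n x f i - (\<Sum>j<m. Hc n x h i j * \<beta>s j))\<bar> \<le> \<kappa> * lam * real n / 2"
  shows "\<exists>\<beta>. is_lasso_min n m x f h lam \<beta>
     \<and> (\<forall>\<gamma>. is_lasso_min n m x f h lam \<gamma> \<longrightarrow> \<gamma> = \<beta>)
     \<and> supp \<beta> \<subseteq> supp \<beta>s
     \<and> (\<forall>k\<in>supp \<beta>s. \<bar>\<beta> k - \<beta>s k\<bar>
          \<le> (1 + \<kappa> / 2) * sqrt (real (card (supp \<beta>s))) * lam / \<nu>)"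
proof -
  let ?L = "lasso_loss n m (fc n x f) (Hc n x h) lam"
  let ?c = "resid_corr n m (fc n x f) (Hc n x h)"
  let ?S = "supp \<beta>s"
  have n: "n > 0" and lam_nonneg: "0 \<le> lam"
    using n_pos lam_pos by simp_all
  have S: "?S \<subseteq> {..<m}"
    using \<beta>s_vec by (auto simp: supp_def vecs_def not_less[symmetric])
  then have "finite ?S"
    by (rule finite_subset) simp
  have noise': "\<forall>k<m. \<bar>?c \<beta>s k\<bar> \<le> \<kappa> * lam * real n / 2"
    using noise by (simp add: resid_corr_def)
  obtain b where b: "supp b \<subseteq> ?S" and min: "\<forall>b'. supp b' \<subseteq> ?S \<longrightarrow> ?L b \<le> ?L b'"
    using lasso_restricted_min_exists[OF lam_pos S] by blast
  have err: "L2_set (\<lambda>j. b j - \<beta>s j) ?S \<le> (1 + \<kappa> / 2) * sqrt (card ?S) * lam / \<nu>"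
    using lasso_restricted_min_error_L2_le[OF n nu_pos lam_nonneg S b order_refl min eig] noise' S
    by blast
  have strict: "\<forall>k\<in>{..<m} - ?S. \<bar>?c b k\<bar> < real n * lam"
    using lasso_resid_corr_off_support_less[OF n nu_pos lam_pos kappa S b order_refl _ _ err]
      incoh noise' by blast
  have inj: "\<forall>u. (\<Sum>i<n. (\<Sum>j\<in>?S. Hc n x h i j * u j)\<^sup>2) = 0 \<longrightarrow> (\<forall>j\<in>?S. u j = 0)"
    using n nu_pos by (intro lincomb_injective_of_lower_bound[OF _ \<open>finite ?S\<close> eig]) simp
  note pdw = lasso_unique_min_of_strict_dual_feasible[OF n lam_nonneg S b min strict inj]
  show ?thesis
    unfolding is_lasso_min_def lasso_obj_eq_lasso_loss
  proof (intro exI conjI allI impI ballI)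
    show "b \<in> vecs m"
      using b S by (auto simp: vecs_def supp_def)
    show "\<bar>b k - \<beta>s k\<bar> \<le> (1 + \<kappa> / 2) * sqrt (card ?S) * lam / \<nu>" if "k \<in> ?S" for k
      using abs_le_L2_set[OF \<open>finite ?S\<close> that, of "\<lambda>j. b j - \<beta>s j"] err by simp
    show "supp b \<subseteq> ?S"
      by (rule b)
    show "?L b \<le> ?L \<gamma>" if "\<gamma> \<in> vecs m" for \<gamma>
      using pdw(1) that .
    show "\<gamma> = b" if "\<gamma> \<in> vecs m \<and> (\<forall>\<gamma>'\<in>vecs m. ?L \<gamma> \<le> ?L \<gamma>')" for \<gamma>
      using pdw(2) that \<open>b \<in> vecs m\<close> by blast
  qed
qed

end
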